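(* Let $d\ge 1$ be an integer and let $\mathbb{T}_d$ be the tree in which every vertex has degree $d+1$, with a distinguished vertex $\mathcal{O}$ (the origin). Consider the cone percolation process on $\mathbb{T}_d$ with radius of influence $R$, and let $I$ be the set of vertices reached by it. If $\mathbb{E}(d^R) < 2-\frac{1}{d}$, then $$\frac{d+\mathbb{E}(d^R)-p_0}{d\,[1-\mathbb{E}(d^R)+p_0]}\ \le\ \mathbb{E}(|I|)\ \le\ \frac{\mathbb{E}(d^R)+d-2}{2d-1-d\,\mathbb{E}(d^R)}.$$
   Context: Cone percolation process: Let $\mathbb{T}$ be a tree with origin $\mathcal{O}$ and graph distance $d(\cdot,\cdot)$. Write $u\le v$ if $u$ lies on the path from $\mathcal{O}$ to $v$. Let $R$ be a random variable with values in $\{0,1,2,\dots\}$, $p_k=\mathbb{P}(R=k)$, and assume $p_0\in(0,1)$. Let $\{R_v\}_{v}$ be i.i.d. copies of $R$ indexed by the vertices. For each vertex $u$ let $B_u=\{v: u\le v,\ d(u,v)\le R_u\}$. Set $I_0=\{\mathcal{O}\}$, $I_{n+1}=\bigcup_{u\in I_n}B_u$ for $n\ge 0$, and $I=\bigcup_{n\ge0}I_n$. *)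

theory Defs
  imports "HOL-Probability.Probability"
begin

text \<open>The tree T_d rooted at the origin: vertices are finite words;
  the origin is the empty word, which has d+1 children; every other vertex has
  d children (so every vertex has degree d+1). u is below v (u on the path from
  the origin to v) iff u is a prefix of v, and then d(u,v) = length v - length u.\<close>

definition tree_vert :: "nat \<Rightarrow> nat list set" where
  "tree_vert d = {xs. \<forall>i<length xs. xs ! i < (if i = 0 then d + 1 else d)}"

definition anc_le :: "nat list \<Rightarrow> nat list \<Rightarrow> bool" where
  "anc_le u v \<longleftrightarrow> (\<exists>w. v = u @ w)"

definition cone_ball :: "nat \<Rightarrow> (nat list \<Rightarrow> nat) \<Rightarrow> nat list \<Rightarrow> nat list set" where
  "cone_ball d r u = {v \<in> tree_vert d. anc_le u v \<and> length v - length u \<le> r u}"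

fun cone_gen :: "nat \<Rightarrow> (nat list \<Rightarrow> nat) \<Rightarrow> nat \<Rightarrow> nat list set" where
  "cone_gen d r 0 = {[]}"
| "cone_gen d r (Suc n) = (\<Union>u\<in>cone_gen d r n. cone_ball d r u)"

definition cone_reached :: "nat \<Rightarrow> (nat list \<Rightarrow> nat) \<Rightarrow> nat list set" where
  "cone_reached d r = (\<Union>n. cone_gen d r n)"

end

theory Submission
  imports Defs
begin

text \<open>Let \<open>X u\<close> be the number of vertices reached by the cone process started at \<open>u\<close>.
  The vertices at distance exactly \<open>R u\<close> below \<open>u\<close> start cones in disjoint subtrees, and every
  vertex reached from \<open>u\<close> other than \<open>u\<close> is reached from a strict descendant of \<open>u\<close> within
  distance \<open>R u\<close>; hence \<open>1 + \<Sum>\<^sub>w X w \<le> X u \<le> 1 + \<Sum>\<^sub>x X x\<close> over the sphere and the punctured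
  ball of radius \<open>R u\<close>. Since \<open>R u\<close> is independent of the radii below \<open>u\<close>, taking expectations
  and comparing with the infimum (supremum) \<open>m\<close> of \<open>E X w\<close> over non-root vertices gives
  \<open>m \<ge> 1 + (E d\<^sup>R - p\<^sub>0) m\<close> and \<open>m \<le> 1 + d (E d\<^sup>R - 1) / (d - 1) m\<close>, the latter for counts
  truncated at finite depth so that \<open>m\<close> is finite. Solving these and applying the same
  recursion once more at the root, which has \<open>d + 1\<close> children, yields the two bounds.\<close>

section \<open>Vertices of the tree\<close>

lemma anc_le_refl [simp]: "anc_le u u"
  by (simp add: anc_le_def)

lemma anc_le_trans: "anc_le u v \<Longrightarrow> anc_le v w \<Longrightarrow> anc_le u w"
  by (auto simp: anc_le_def)

lemma anc_le_length: "anc_le u v \<Longrightarrow> length u \<le> length v"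
  by (auto simp: anc_le_def)

lemma anc_le_same_length_eq: "anc_le u w \<Longrightarrow> anc_le v w \<Longrightarrow> length u = length v \<Longrightarrow> u = v"
  by (auto simp: anc_le_def)

lemma Nil_in_tree_vert: "[] \<in> tree_vert d"
  by (simp add: tree_vert_def)

definition branching :: "nat \<Rightarrow> nat list \<Rightarrow> nat" where
  "branching d u = (if u = [] then d + 1 else d)"

lemma append_in_tree_vert_iff:
  "u @ z \<in> tree_vert d \<longleftrightarrow>
     u \<in> tree_vert d \<and> (\<forall>i<length z. z ! i < (if i = 0 then branching d u else d))"
proof -
  have split: "(\<forall>i<length (u @ z). P i) \<longleftrightarrow>
      (\<forall>i<length u. P i) \<and> (\<forall>i<length z. P (length u + i))" for P
  proof safe
    fix i assume "\<forall>i<length (u @ z). P i" "i < length z"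
    then show "P (length u + i)" by simp
  next
    fix i assume "\<forall>i<length u. P i" "\<forall>i<length z. P (length u + i)" "i < length (u @ z)"
    then show "P i" by (cases "i < length u") (auto dest: spec[of _ "i - length u"])
  qed simp
  show ?thesis
    unfolding tree_vert_def mem_Collect_eq split
    by (cases "u = []") (auto simp: nth_append branching_def)
qed

lemma append_Cons_in_tree_vert_iff:
  "u @ a # z \<in> tree_vert d \<longleftrightarrow> u \<in> tree_vert d \<and> a < branching d u \<and> set z \<subseteq> {..<d}"
  unfolding append_in_tree_vert_iff by (auto simp: All_less_Suc2 in_set_conv_nth subset_iff)

lemma finite_tree_vert_length_le: "finite {v \<in> tree_vert d. length v \<le> n}"
proof (rule finite_subset)
  show "{v \<in> tree_vert d. length v \<le> n} \<subseteq> {xs. set xs \<subseteq> {..d} \<and> length xs \<le> n}"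
    by (force simp: tree_vert_def in_set_conv_nth split: if_splits)
qed (simp add: finite_lists_length_le)

definition subtree :: "nat \<Rightarrow> nat list \<Rightarrow> nat list set" where
  "subtree d u = {v \<in> tree_vert d. anc_le u v}"

lemma subtree_subset_strict:
  assumes "x \<in> subtree d u - {u}"
  shows "subtree d x \<subseteq> subtree d u - {u}"
proof
  fix v assume v: "v \<in> subtree d x"
  have "anc_le u x" "x \<noteq> u" "anc_le x v"
    using assms v by (auto simp: subtree_def)
  moreover from this have "v \<noteq> u"
    using anc_le_same_length_eq[of x u u] anc_le_length[of u x] anc_le_length[of x u] by auto
  ultimately show "v \<in> subtree d u - {u}"
    using v by (auto simp: subtree_def intro: anc_le_trans)
qed

definition depth_le :: "nat \<Rightarrow> nat list set" where
  "depth_le n = {v. length v \<le> n}"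

definition desc_sphere :: "nat \<Rightarrow> nat list \<Rightarrow> nat \<Rightarrow> nat list set" where
  "desc_sphere d u k = {v \<in> tree_vert d. anc_le u v \<and> v \<noteq> u \<and> length v = length u + k}"

definition desc_ball :: "nat \<Rightarrow> nat list \<Rightarrow> nat \<Rightarrow> nat list set" where
  "desc_ball d u k = {v \<in> tree_vert d. anc_le u v \<and> v \<noteq> u \<and> length v \<le> length u + k}"

lemma desc_sphere_0 [simp]: "desc_sphere d u 0 = {}"
  by (auto simp: desc_sphere_def anc_le_def)

lemma desc_sphere_Suc:
  assumes "u \<in> tree_vert d"
  shows "desc_sphere d u (Suc j) =
    (\<lambda>(a, z). u @ a # z) ` ({..<branching d u} \<times> {z. set z \<subseteq> {..<d} \<and> length z = j})"
proof -
  have "v \<in> desc_sphere d u (Suc j) \<longleftrightarrow> (\<exists>a z. v = u @ a # z \<and> v \<in> tree_vert d \<and> length z = j)"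
    for v
  proof
    assume "v \<in> desc_sphere d u (Suc j)"
    then obtain w where "v = u @ w" "v \<in> tree_vert d" "length w = Suc j"
      by (auto simp: desc_sphere_def anc_le_def)
    then show "\<exists>a z. v = u @ a # z \<and> v \<in> tree_vert d \<and> length z = j"
      by (auto simp: length_Suc_conv)
  qed (auto simp: desc_sphere_def anc_le_def)
  then show ?thesis
    using assms by (force simp: append_Cons_in_tree_vert_iff image_iff)
qed

lemma card_desc_sphere_Suc:
  "u \<in> tree_vert d \<Longrightarrow> card (desc_sphere d u (Suc j)) = branching d u * d ^ j"
  unfolding desc_sphere_Suc
  by (subst card_image) (auto simp: inj_on_def card_lists_length_eq card_cartesian_product)

lemma finite_desc_ball: "finite (desc_ball d u k)"
  by (rule finite_subset[OF _ finite_tree_vert_length_le[of d "length u + k"]])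
     (auto simp: desc_ball_def)

lemma finite_desc_sphere: "finite (desc_sphere d u k)"
  by (rule finite_subset[OF _ finite_tree_vert_length_le[of d "length u + k"]])
     (auto simp: desc_sphere_def)

lemma desc_ball_eq_UN: "desc_ball d u k = (\<Union>j\<le>k. desc_sphere d u j)"
  by (auto simp: desc_ball_def desc_sphere_def anc_le_def)

lemma card_desc_ball:
  assumes "u \<in> tree_vert d"
  shows "card (desc_ball d u k) = (\<Sum>j<k. branching d u * d ^ j)"
proof -
  have "card (desc_ball d u k) = (\<Sum>j\<le>k. card (desc_sphere d u j))"
    unfolding desc_ball_eq_UN
    by (rule card_UN_disjoint) (use finite_desc_sphere in \<open>auto simp: desc_sphere_def\<close>)
  also have "\<dots> = (\<Sum>j<k. card (desc_sphere d u (Suc j)))"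
    by (simp only: lessThan_Suc_atMost[symmetric] sum.lessThan_Suc_shift) simp
  finally show ?thesis
    using assms by (simp add: card_desc_sphere_Suc)
qed

lemma cone_ball_minus_self: "cone_ball d r u - {u} = desc_ball d u (r u)"
  unfolding cone_ball_def desc_ball_def by (auto dest: anc_le_length)

lemma real_card_desc_sphere:
  assumes "u \<in> tree_vert d" "d \<ge> 1"
  shows "real (card (desc_sphere d u k)) = branching d u / d * (real d ^ k - of_bool (k = 0))"
  using assms by (cases k) (simp_all add: card_desc_sphere_Suc)

lemma real_card_desc_ball:
  assumes "u \<in> tree_vert d" "d \<ge> 2"
  shows "real (card (desc_ball d u k)) = branching d u / (real d - 1) * (real d ^ k - 1)"
proof -
  have "real (card (desc_ball d u k)) = branching d u * (\<Sum>j<k. real d ^ j)"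
    using assms(1) by (simp add: card_desc_ball sum_distrib_left)
  also have "\<dots> = branching d u * ((1 - real d ^ k) / (1 - real d))"
    using assms(2) by (simp add: sum_gp_strict)
  also have "\<dots> = branching d u / (real d - 1) * (real d ^ k - 1)"
    using assms(2) by (simp add: field_simps)
  finally show ?thesis .
qed

section \<open>Cone reachability\<close>

abbreviation ecard :: "'a set \<Rightarrow> ennreal" where
  "ecard A \<equiv> emeasure (count_space UNIV) A"

inductive_set cone_reach :: "nat \<Rightarrow> (nat list \<Rightarrow> nat) \<Rightarrow> nat list \<Rightarrow> nat list set"
  for d r u where
  start: "u \<in> cone_reach d r u"
| step: "y \<in> cone_reach d r u \<Longrightarrow> v \<in> cone_ball d r y \<Longrightarrow> v \<in> cone_reach d r u"

lemma cone_reached_eq_cone_reach: "cone_reached d r = cone_reach d r []"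
proof
  have "cone_gen d r n \<subseteq> cone_reach d r []" for n
    by (induction n) (auto intro: cone_reach.intros)
  then show "cone_reached d r \<subseteq> cone_reach d r []"
    unfolding cone_reached_def by auto
next
  show "cone_reach d r [] \<subseteq> cone_reached d r"
  proof
    fix v assume "v \<in> cone_reach d r []"
    then show "v \<in> cone_reached d r"
    proof induction
      case start
      have "[] \<in> cone_gen d r 0" by simp
      then show ?case unfolding cone_reached_def by blast
    next
      case (step y v)
      then obtain n where "y \<in> cone_gen d r n"
        unfolding cone_reached_def by auto
      with step have "v \<in> cone_gen d r (Suc n)" by auto
      then show ?case unfolding cone_reached_def by blast
    qed
  qed
qed

lemma cone_reach_desc:
  assumes "x \<in> tree_vert d" "v \<in> cone_reach d r x"
  shows "v \<in> tree_vert d \<and> anc_le x v"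
  using assms(2) by induction (auto simp: assms(1) cone_ball_def intro: anc_le_trans)

lemma emeasure_count_space_cone_reached:
  "emeasure (count_space (tree_vert d)) (cone_reached d r) = ecard (cone_reach d r [])"
proof -
  have "cone_reach d r [] \<subseteq> tree_vert d"
    using cone_reach_desc[OF Nil_in_tree_vert] by blast
  then show ?thesis
    by (simp add: cone_reached_eq_cone_reach emeasure_count_space)
qed

lemma cone_reach_subset: "y \<in> cone_reach d r x \<Longrightarrow> cone_reach d r y \<subseteq> cone_reach d r x"
proof
  fix v assume y: "y \<in> cone_reach d r x" and v: "v \<in> cone_reach d r y"
  from v show "v \<in> cone_reach d r x"
    using y by induction (auto intro: cone_reach.intros)
qed

lemma cone_reach_local:
  assumes "x \<in> tree_vert d" "v \<in> cone_reach d r x"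
    and "\<And>y. y \<in> tree_vert d \<Longrightarrow> anc_le x y \<Longrightarrow> anc_le y v \<Longrightarrow> r y = r' y"
  shows "v \<in> cone_reach d r' x"
  using assms(2,3)
proof induction
  case start
  show ?case by (rule cone_reach.start)
next
  case (step y v)
  have y: "y \<in> tree_vert d" "anc_le x y"
    using cone_reach_desc[OF assms(1) step(1)] by auto
  have yv: "anc_le y v"
    using step(2) by (auto simp: cone_ball_def)
  have "y \<in> cone_reach d r' x"
    using step(3,4) yv by (meson anc_le_trans)
  moreover have "v \<in> cone_ball d r' y"
    using step(2) step(4)[OF y yv] by (auto simp: cone_ball_def)
  ultimately show ?case by (rule cone_reach.step)
qed

lemma cone_reach_cong_depth_le:
  assumes "x \<in> tree_vert d"
    and "\<And>y. y \<in> tree_vert d \<Longrightarrow> anc_le x y \<Longrightarrow> y \<in> depth_le n \<Longrightarrow> r y = r' y"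
  shows "cone_reach d r x \<inter> depth_le n = cone_reach d r' x \<inter> depth_le n"
proof -
  have transfer: "v \<in> cone_reach d r2 x"
    if "v \<in> cone_reach d r1 x" "v \<in> depth_le n"
      and "\<And>y. y \<in> tree_vert d \<Longrightarrow> anc_le x y \<Longrightarrow> y \<in> depth_le n \<Longrightarrow> r1 y = r2 y"
    for r1 r2 v
    using assms(1) that(1)
  proof (rule cone_reach_local)
    fix y assume "y \<in> tree_vert d" "anc_le x y" "anc_le y v"
    then show "r1 y = r2 y"
      using that(2,3) anc_le_length[of y v] by (auto simp: depth_le_def)
  qed
  show ?thesis
  proof (intro equalityI subsetI)
    fix v assume "v \<in> cone_reach d r x \<inter> depth_le n"
    then show "v \<in> cone_reach d r' x \<inter> depth_le n"
      using transfer[of v r r'] assms(2) by blast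
  next
    fix v assume "v \<in> cone_reach d r' x \<inter> depth_le n"
    then show "v \<in> cone_reach d r x \<inter> depth_le n"
      using transfer[of v r' r] assms(2) by (metis IntD1 IntD2 IntI)
  qed
qed

lemma cone_reach_cong:
  assumes "x \<in> tree_vert d" and "\<And>y. y \<in> tree_vert d \<Longrightarrow> anc_le x y \<Longrightarrow> r y = r' y"
  shows "cone_reach d r x = cone_reach d r' x"
proof -
  have "cone_reach d r x \<inter> depth_le n = cone_reach d r' x \<inter> depth_le n" for n
    using assms by (intro cone_reach_cong_depth_le) auto
  then show ?thesis
    by (auto simp: depth_le_def)
qed

lemma ecard_cone_reach_ge:
  assumes "u \<in> tree_vert d"
  shows "1 + (\<Sum>w\<in>desc_sphere d u (r u). ecard (cone_reach d r w)) \<le> ecard (cone_reach d r u)"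
proof -
  let ?S = "desc_sphere d u (r u)"
  have S: "w \<in> cone_ball d r u" "length u < length w" "w \<in> tree_vert d" if "w \<in> ?S" for w
    using that by (auto simp: desc_sphere_def cone_ball_def anc_le_def)
  have sub: "insert u (\<Union>w\<in>?S. cone_reach d r w) \<subseteq> cone_reach d r u"
    using S by (blast intro: cone_reach.intros dest: cone_reach_subset[OF cone_reach.step[OF cone_reach.start]])
  have u_notin: "u \<notin> (\<Union>w\<in>?S. cone_reach d r w)"
    using S cone_reach_desc anc_le_length by (metis UN_E not_le)
  text \<open>Cones started at distinct vertices of the same depth lie in disjoint subtrees.\<close>
  have disj: "disjoint_family_on (cone_reach d r) ?S"
    unfolding disjoint_family_on_def
  proof safe
    fix w w' v assume w: "w \<in> ?S" "w' \<in> ?S" "w \<noteq> w'" "v \<in> cone_reach d r w" "v \<in> cone_reach d r w'"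
    then have "anc_le w v" "anc_le w' v"
      using S cone_reach_desc by blast+
    moreover have "length w = length w'"
      using w by (auto simp: desc_sphere_def)
    ultimately show "v \<in> {}"
      using anc_le_same_length_eq w(3) by blast
  qed
  have "1 + (\<Sum>w\<in>?S. ecard (cone_reach d r w)) = ecard {u} + ecard (\<Union>w\<in>?S. cone_reach d r w)"
    using disj finite_desc_sphere by (simp add: sum_emeasure)
  also have "\<dots> = ecard (insert u (\<Union>w\<in>?S. cone_reach d r w))"
    using u_notin by (subst plus_emeasure) auto
  also have "\<dots> \<le> ecard (cone_reach d r u)"
    using sub by (intro emeasure_mono) auto
  finally show ?thesis .
qed

lemma cone_reach_subset_ball:
  "cone_reach d r u \<subseteq> insert u (\<Union>y\<in>cone_ball d r u - {u}. cone_reach d r y)"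
proof
  fix v assume "v \<in> cone_reach d r u"
  then show "v \<in> insert u (\<Union>y\<in>cone_ball d r u - {u}. cone_reach d r y)"
  proof induction
    case start
    then show ?case by simp
  next
    case (step y v)
    show ?case
    proof (cases "y = u")
      case True
      then show ?thesis
        using step by (cases "v = u") (auto intro: cone_reach.start)
    next
      case False
      then obtain z where "z \<in> cone_ball d r u - {u}" "y \<in> cone_reach d r z"
        using step by auto
      then show ?thesis
        using step(2) by (auto intro: cone_reach.step)
    qed
  qed
qed

lemma ecard_cone_reach_le:
  "ecard (cone_reach d r u \<inter> D) \<le> 1 + (\<Sum>x\<in>desc_ball d u (r u). ecard (cone_reach d r x \<inter> D))"
proof -
  have "cone_reach d r u \<inter> D \<subseteq> {u} \<union> (\<Union>x\<in>desc_ball d u (r u). cone_reach d r x \<inter> D)"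
    using cone_reach_subset_ball[of d r u] cone_ball_minus_self[of d r u] by auto
  then have "ecard (cone_reach d r u \<inter> D) \<le> ecard ({u} \<union> (\<Union>x\<in>desc_ball d u (r u). cone_reach d r x \<inter> D))"
    by (rule emeasure_mono) simp
  also have "\<dots> \<le> ecard {u} + ecard (\<Union>x\<in>desc_ball d u (r u). cone_reach d r x \<inter> D)"
    by (rule emeasure_subadditive) auto
  also have "ecard (\<Union>x\<in>desc_ball d u (r u). cone_reach d r x \<inter> D)
      \<le> (\<Sum>x\<in>desc_ball d u (r u). ecard (cone_reach d r x \<inter> D))"
    by (rule emeasure_subadditive_finite) (auto simp: finite_desc_ball)
  finally show ?thesis by (simp add: add_left_mono)
qed

section \<open>Conditioning on an independent discrete variable\<close>

lemma (in prob_space) nn_integral_indep_var_mult: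
  fixes f g :: "'a \<Rightarrow> ennreal"
  assumes "indep_var borel f borel g"
  shows "(\<integral>\<^sup>+\<omega>. f \<omega> * g \<omega> \<partial>M) = (\<integral>\<^sup>+\<omega>. f \<omega> \<partial>M) * (\<integral>\<^sup>+\<omega>. g \<omega> \<partial>M)"
proof -
  have indep: "indep_vars (\<lambda>_. borel) (case_bool f g) UNIV"
  proof -
    have "case_bool (borel :: ennreal measure) borel = (\<lambda>_. borel)"
      by (simp add: fun_eq_iff split: bool.split)
    then show ?thesis
      using assms unfolding indep_var_def by simp
  qed
  have "(\<integral>\<^sup>+\<omega>. (\<Prod>i\<in>UNIV. case_bool f g i \<omega>) \<partial>M) = (\<Prod>i\<in>UNIV. \<integral>\<^sup>+\<omega>. case_bool f g i \<omega> \<partial>M)"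
    by (rule indep_vars_nn_integral[OF _ indep]) auto
  then show ?thesis
    by (simp add: UNIV_bool mult.commute)
qed

lemma (in prob_space) nn_integral_indep_var_discrete:
  fixes \<kappa> :: "'b \<Rightarrow> nat" and H :: "nat \<Rightarrow> 'b \<Rightarrow> ennreal"
  assumes indep: "indep_var Mx X N Y" and \<kappa>: "\<kappa> \<in> measurable Mx (count_space UNIV)"
    and H: "\<And>k. H k \<in> borel_measurable N"
  shows "(\<integral>\<^sup>+\<omega>. H (\<kappa> (X \<omega>)) (Y \<omega>) \<partial>M) = (\<integral>\<^sup>+\<omega>. (\<integral>\<^sup>+\<omega>'. H (\<kappa> (X \<omega>)) (Y \<omega>') \<partial>M) \<partial>M)"
proof -
  have X: "(\<lambda>\<omega>. \<kappa> (X \<omega>)) \<in> measurable M (count_space UNIV)" and Y: "Y \<in> measurable M N"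
    using indep \<kappa> by (auto simp: indep_var_eq)
  have ind: "(\<lambda>\<omega>. indicator {k} (\<kappa> (X \<omega>)) :: ennreal) \<in> borel_measurable M" for k
    by (rule measurable_compose[OF X]) simp
  have expand: "(\<integral>\<^sup>+\<omega>. G (\<kappa> (X \<omega>)) \<omega> \<partial>M) = (\<Sum>k. \<integral>\<^sup>+\<omega>. indicator {k} (\<kappa> (X \<omega>)) * G k \<omega> \<partial>M)"
    if G: "\<And>k. G k \<in> borel_measurable M" for G :: "nat \<Rightarrow> 'a \<Rightarrow> ennreal"
  proof -
    have single: "G n \<omega> = (\<Sum>k. indicator {k} n * G k \<omega>)" for n \<omega>
    proof -
      have "(\<lambda>k. indicator {k} n * G k \<omega>) = (\<lambda>k. if k = n then G k \<omega> else 0)"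
        by (auto simp: fun_eq_iff)
      moreover have "(\<lambda>k. if k = n then G k \<omega> else 0) sums G n \<omega>"
        by (rule sums_single)
      ultimately show ?thesis
        by (simp add: sums_iff)
    qed
    have "(\<integral>\<^sup>+\<omega>. G (\<kappa> (X \<omega>)) \<omega> \<partial>M) = (\<integral>\<^sup>+\<omega>. (\<Sum>k. indicator {k} (\<kappa> (X \<omega>)) * G k \<omega>) \<partial>M)"
      by (rule nn_integral_cong) (rule single)
    also have "\<dots> = (\<Sum>k. \<integral>\<^sup>+\<omega>. indicator {k} (\<kappa> (X \<omega>)) * G k \<omega> \<partial>M)"
      using ind G by (intro nn_integral_suminf borel_measurable_times_ennreal)
    finally show ?thesis .
  qed
  have factor: "(\<integral>\<^sup>+\<omega>. indicator {k} (\<kappa> (X \<omega>)) * H k (Y \<omega>) \<partial>M)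
      = (\<integral>\<^sup>+\<omega>. indicator {k} (\<kappa> (X \<omega>)) * (\<integral>\<^sup>+\<omega>'. H k (Y \<omega>') \<partial>M) \<partial>M)" for k
  proof -
    have "indep_var borel ((\<lambda>x. indicator {k} (\<kappa> x) :: ennreal) \<circ> X) borel (H k \<circ> Y)"
      by (rule indep_var_compose[OF indep measurable_compose[OF \<kappa>] H]) simp
    then have "(\<integral>\<^sup>+\<omega>. indicator {k} (\<kappa> (X \<omega>)) * H k (Y \<omega>) \<partial>M)
        = (\<integral>\<^sup>+\<omega>. indicator {k} (\<kappa> (X \<omega>)) \<partial>M) * (\<integral>\<^sup>+\<omega>'. H k (Y \<omega>') \<partial>M)"
      by (auto dest: nn_integral_indep_var_mult simp: comp_def)
    also have "\<dots> = (\<integral>\<^sup>+\<omega>. indicator {k} (\<kappa> (X \<omega>)) * (\<integral>\<^sup>+\<omega>'. H k (Y \<omega>') \<partial>M) \<partial>M)"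
      by (rule nn_integral_multc[symmetric, OF ind])
    finally show ?thesis .
  qed
  have "(\<integral>\<^sup>+\<omega>. H (\<kappa> (X \<omega>)) (Y \<omega>) \<partial>M)
      = (\<Sum>k. \<integral>\<^sup>+\<omega>. indicator {k} (\<kappa> (X \<omega>)) * H k (Y \<omega>) \<partial>M)"
    by (rule expand[of "\<lambda>k \<omega>. H k (Y \<omega>)"]) (rule measurable_compose[OF Y H])
  also have "\<dots> = (\<Sum>k. \<integral>\<^sup>+\<omega>. indicator {k} (\<kappa> (X \<omega>)) * (\<integral>\<^sup>+\<omega>'. H k (Y \<omega>') \<partial>M) \<partial>M)"
    by (simp only: factor)
  also have "\<dots> = (\<integral>\<^sup>+\<omega>. (\<integral>\<^sup>+\<omega>'. H (\<kappa> (X \<omega>)) (Y \<omega>') \<partial>M) \<partial>M)"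
    by (rule expand[of "\<lambda>k \<omega>. \<integral>\<^sup>+\<omega>'. H k (Y \<omega>') \<partial>M", symmetric]) simp
  finally show ?thesis .
qed

section \<open>Measurability of cone sizes\<close>

lemma measurable_PiM_count_space_finite:
  fixes h :: "('i \<Rightarrow> 'b::countable) \<Rightarrow> ennreal"
  assumes F: "finite F"
  shows "h \<in> borel_measurable (PiM F (\<lambda>_. count_space UNIV))"
proof -
  let ?P = "PiM F (\<lambda>_. count_space UNIV) :: ('i \<Rightarrow> 'b) measure"
  have countable: "countable (space ?P)"
    unfolding space_PiM by (rule countable_PiE[OF F]) simp
  have ident: "(\<lambda>x. x) \<in> measurable ?P (count_space (space ?P))"
    unfolding measurable_count_space_eq_countable[OF countable]
  proof safe
    fix a assume a: "a \<in> space ?P"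
    then have "(\<lambda>x. x) -` {a} \<inter> space ?P = (\<Pi>\<^sub>E i\<in>F. {a i})"
      by (simp add: space_PiM PiE_singleton PiE_iff)
    also have "\<dots> \<in> sets ?P"
      by (rule sets_PiM_I_finite[OF F]) simp
    finally show "(\<lambda>x. x) -` {a} \<inter> space ?P \<in> sets ?P" .
  qed
  have "(\<lambda>x. (\<lambda>f _. h f) x x) \<in> borel_measurable ?P"
    by (rule measurable_compose_countable'[OF _ ident countable]) simp
  then show ?thesis by simp
qed

lemma ecard_eq_SUP_depth_le: "ecard A = (SUP n. ecard (A \<inter> depth_le n))"
proof -
  have "(SUP n. ecard (A \<inter> depth_le n)) = ecard (\<Union>n. A \<inter> depth_le n)"
    by (rule SUP_emeasure_incseq) (auto simp: incseq_def depth_le_def)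
  also have "(\<Union>n. A \<inter> depth_le n) = A"
    by (auto simp: depth_le_def)
  finally show ?thesis by simp
qed

lemma measurable_ecard_cone_reach_depth_le:
  assumes x: "x \<in> tree_vert d" and S: "subtree d x \<subseteq> S" "S \<subseteq> tree_vert d"
  shows "(\<lambda>r. ecard (cone_reach d r x \<inter> D \<inter> depth_le n))
    \<in> borel_measurable (PiM S (\<lambda>_. count_space UNIV))"
proof -
  let ?T = "S \<inter> depth_le n"
  have "finite ?T"
    by (rule finite_subset[OF _ finite_tree_vert_length_le[of d n]])
       (use S in \<open>auto simp: depth_le_def\<close>)
  then have "(\<lambda>r. ecard (cone_reach d (restrict r ?T) x \<inter> depth_le n \<inter> D))
      \<in> borel_measurable (PiM S (\<lambda>_. count_space UNIV))"
    by (intro measurable_compose[OF measurable_restrict_subset measurable_PiM_count_space_finite]) auto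
  moreover have "cone_reach d (restrict r ?T) x \<inter> depth_le n = cone_reach d r x \<inter> depth_le n" for r
    using x S by (intro cone_reach_cong_depth_le) (auto simp: subtree_def)
  ultimately show ?thesis
    by (simp add: Int_ac)
qed

lemma measurable_ecard_cone_reach:
  assumes "x \<in> tree_vert d" "subtree d x \<subseteq> S" "S \<subseteq> tree_vert d"
  shows "(\<lambda>r. ecard (cone_reach d r x \<inter> D)) \<in> borel_measurable (PiM S (\<lambda>_. count_space UNIV))"
proof -
  have "(\<lambda>r. SUP n. ecard (cone_reach d r x \<inter> D \<inter> depth_le n))
      \<in> borel_measurable (PiM S (\<lambda>_. count_space UNIV))"
    by (rule borel_measurable_SUP) (auto intro: measurable_ecard_cone_reach_depth_le[OF assms])
  then show ?thesis
    by (subst ecard_eq_SUP_depth_le)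
qed

lemma ennreal_geometric_le_of_recursion:
  fixes m :: ennreal
  assumes "1 + ennreal a * m \<le> m" "0 \<le> a" "a < 1"
  shows "ennreal (1 / (1 - a)) \<le> m"
proof (cases "m = \<top>")
  case False
  then obtain y where y: "m = ennreal y" "0 \<le> y"
    by (cases m) auto
  then have "ennreal (1 + a * y) \<le> ennreal y"
    using assms by (simp add: ennreal_mult)
  then have "1 + a * y \<le> y"
    using y by simp
  then show ?thesis
    using assms y by (simp add: field_simps)
qed simp

lemma ennreal_le_geometric_of_recursion:
  fixes m :: ennreal
  assumes "m \<le> 1 + ennreal b * m" "m < \<top>" "0 \<le> b" "b < 1"
  shows "m \<le> ennreal (1 / (1 - b))"
proof -
  obtain y where y: "m = ennreal y" "0 \<le> y"
    using assms(2) by (cases m) auto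
  then have "ennreal y \<le> ennreal (1 + b * y)"
    using assms by (simp add: ennreal_mult)
  then have "y \<le> 1 + b * y"
    using y assms by (subst (asm) ennreal_le_iff) auto
  then show ?thesis
    using assms y by (simp add: field_simps ennreal_leI)
qed

section \<open>Expected cone sizes\<close>

locale cone_percolation = prob_space M for M :: "'a measure" +
  fixes d :: nat and R :: "nat list \<Rightarrow> 'a \<Rightarrow> nat"
  assumes indep_radii: "indep_vars (\<lambda>_. count_space UNIV) R (tree_vert d)"
    and distr_radii: "\<forall>v\<in>tree_vert d. distr M (count_space UNIV) (R v) = distr M (count_space UNIV) (R [])"
begin

definition reach_count :: "nat list set \<Rightarrow> nat list \<Rightarrow> 'a \<Rightarrow> ennreal" where
  "reach_count D x \<omega> = ecard (cone_reach d (\<lambda>v. R v \<omega>) x \<inter> D)"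

definition radii_below :: "nat list \<Rightarrow> 'a \<Rightarrow> nat list \<Rightarrow> nat" where
  "radii_below u \<omega> = restrict (\<lambda>v. R v \<omega>) (subtree d u - {u})"

lemma measurable_radius: "v \<in> tree_vert d \<Longrightarrow> R v \<in> measurable M (count_space UNIV)"
  using indep_radii unfolding indep_vars_def by auto

lemma measurable_fun_radius:
  "v \<in> tree_vert d \<Longrightarrow> (\<lambda>\<omega>. h (R v \<omega>) :: ennreal) \<in> borel_measurable M"
  by (rule measurable_compose[OF measurable_radius]) auto

lemma nn_integral_radius_eq_root:
  assumes "v \<in> tree_vert d"
  shows "(\<integral>\<^sup>+\<omega>. h (R v \<omega>) \<partial>M) = (\<integral>\<^sup>+\<omega>. h (R [] \<omega>) \<partial>M)"
proof -
  have "(\<integral>\<^sup>+\<omega>. h (R v \<omega>) \<partial>M) = (\<integral>\<^sup>+k. h k \<partial>distr M (count_space UNIV) (R v))"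
    by (rule nn_integral_distr[symmetric, OF measurable_radius[OF assms]]) simp
  also have "\<dots> = (\<integral>\<^sup>+k. h k \<partial>distr M (count_space UNIV) (R []))"
    using distr_radii assms by simp
  also have "\<dots> = (\<integral>\<^sup>+\<omega>. h (R [] \<omega>) \<partial>M)"
    by (rule nn_integral_distr[OF measurable_radius[OF Nil_in_tree_vert]]) simp
  finally show ?thesis .
qed

lemma reach_count_eq_radii_below:
  assumes "x \<in> subtree d u - {u}"
  shows "reach_count D x \<omega> = ecard (cone_reach d (radii_below u \<omega>) x \<inter> D)"
proof -
  have "cone_reach d (\<lambda>v. R v \<omega>) x = cone_reach d (radii_below u \<omega>) x"
    using assms subtree_subset_strict[OF assms]
    by (intro cone_reach_cong) (auto simp: subtree_def radii_below_def)
  then show ?thesis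
    by (simp add: reach_count_def)
qed

lemma measurable_reach_count:
  assumes "x \<in> tree_vert d"
  shows "reach_count D x \<in> borel_measurable M"
proof -
  have "(\<lambda>\<omega>. ecard (cone_reach d (restrict (\<lambda>v. R v \<omega>) (subtree d x)) x \<inter> D)) \<in> borel_measurable M"
    using assms measurable_radius
    by (intro measurable_compose[OF measurable_restrict measurable_ecard_cone_reach])
       (auto simp: subtree_def)
  moreover have "cone_reach d (restrict (\<lambda>v. R v \<omega>) (subtree d x)) x = cone_reach d (\<lambda>v. R v \<omega>) x" for \<omega>
    using assms by (intro cone_reach_cong) (auto simp: subtree_def)
  ultimately show ?thesis
    by (simp add: reach_count_def[abs_def])
qed

text \<open>The radius at \<open>u\<close> decides which strict descendants are visited next, while the numbers
  reached from them depend only on the independent radii below \<open>u\<close>.\<close>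

lemma nn_integral_sum_reach_count:
  assumes u: "u \<in> tree_vert d"
    and F: "\<And>k. F k \<subseteq> subtree d u - {u}" "\<And>k. finite (F k)"
  shows "(\<integral>\<^sup>+\<omega>. (\<Sum>x\<in>F (R u \<omega>). reach_count D x \<omega>) \<partial>M)
       = (\<integral>\<^sup>+\<omega>. (\<Sum>x\<in>F (R u \<omega>). \<integral>\<^sup>+\<omega>'. reach_count D x \<omega>' \<partial>M) \<partial>M)"
proof -
  let ?S = "subtree d u - {u}"
  let ?H = "\<lambda>k r. \<Sum>x\<in>F k. ecard (cone_reach d r x \<inter> D)"
  have S: "?S \<subseteq> tree_vert d"
    by (auto simp: subtree_def)
  have indep: "indep_var (PiM {u} (\<lambda>_. count_space UNIV)) (\<lambda>\<omega>. restrict (\<lambda>v. R v \<omega>) {u})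
      (PiM ?S (\<lambda>_. count_space UNIV)) (radii_below u)"
    unfolding radii_below_def[abs_def]
    by (rule indep_var_restrict[OF indep_radii]) (use u S in auto)
  have H: "?H k \<in> borel_measurable (PiM ?S (\<lambda>_. count_space UNIV))" for k
  proof (intro borel_measurable_sum measurable_ecard_cone_reach)
    fix x assume "x \<in> F k"
    then have x: "x \<in> ?S" using F by auto
    then show "x \<in> tree_vert d" using S by auto
    show "subtree d x \<subseteq> ?S" by (rule subtree_subset_strict[OF x])
  qed (rule S)
  have "(\<integral>\<^sup>+\<omega>. ?H (restrict (\<lambda>v. R v \<omega>) {u} u) (radii_below u \<omega>) \<partial>M)
      = (\<integral>\<^sup>+\<omega>. (\<integral>\<^sup>+\<omega>'. ?H (restrict (\<lambda>v. R v \<omega>) {u} u) (radii_below u \<omega>') \<partial>M) \<partial>M)"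
    by (rule nn_integral_indep_var_discrete[OF indep measurable_component_singleton H]) simp
  moreover have "(\<Sum>x\<in>F k. reach_count D x \<omega>) = ?H k (radii_below u \<omega>)" for k \<omega>
    using F by (intro sum.cong refl reach_count_eq_radii_below) auto
  moreover have "(\<Sum>x\<in>F k. \<integral>\<^sup>+\<omega>'. reach_count D x \<omega>' \<partial>M) = (\<integral>\<^sup>+\<omega>'. ?H k (radii_below u \<omega>') \<partial>M)" for k
  proof -
    have "(\<integral>\<^sup>+\<omega>'. ?H k (radii_below u \<omega>') \<partial>M) = (\<integral>\<^sup>+\<omega>'. (\<Sum>x\<in>F k. reach_count D x \<omega>') \<partial>M)"
      using F by (intro nn_integral_cong sum.cong refl reach_count_eq_radii_below[symmetric]) auto
    also have "\<dots> = (\<Sum>x\<in>F k. \<integral>\<^sup>+\<omega>'. reach_count D x \<omega>' \<partial>M)"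
      using F S by (intro nn_integral_sum measurable_reach_count) auto
    finally show ?thesis ..
  qed
  ultimately show ?thesis
    by simp
qed

lemma measurable_sum_reach_count:
  assumes u: "u \<in> tree_vert d" and F: "\<And>k. F k \<subseteq> tree_vert d"
  shows "(\<lambda>\<omega>. \<Sum>x\<in>F (R u \<omega>). reach_count D x \<omega>) \<in> borel_measurable M"
proof -
  have "(\<lambda>\<omega>. \<Sum>x\<in>F k. reach_count D x \<omega>) \<in> borel_measurable M" for k
    using F by (intro borel_measurable_sum) (auto intro: measurable_reach_count)
  then show ?thesis
    by (rule measurable_compose_countable[OF _ measurable_radius[OF u]])
qed

abbreviation pow_mean :: real where
  "pow_mean \<equiv> expectation (\<lambda>\<omega>. real d ^ R [] \<omega>)"

abbreviation prob_zero_radius :: real where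
  "prob_zero_radius \<equiv> prob {\<omega> \<in> space M. R [] \<omega> = 0}"

lemma expected_reach_count_ge:
  assumes u: "u \<in> tree_vert d"
  shows "1 + (\<integral>\<^sup>+\<omega>. (\<Sum>w\<in>desc_sphere d u (R u \<omega>). \<integral>\<^sup>+\<omega>'. reach_count UNIV w \<omega>' \<partial>M) \<partial>M)
    \<le> (\<integral>\<^sup>+\<omega>. reach_count UNIV u \<omega> \<partial>M)"
proof -
  have sphere: "desc_sphere d u k \<subseteq> subtree d u - {u}" for k
    by (auto simp: desc_sphere_def subtree_def)
  have "(\<lambda>\<omega>. \<Sum>w\<in>desc_sphere d u (R u \<omega>). reach_count UNIV w \<omega>) \<in> borel_measurable M"
    using sphere by (intro measurable_sum_reach_count[OF u]) (auto simp: subtree_def)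
  then have "(\<integral>\<^sup>+\<omega>. 1 + (\<Sum>w\<in>desc_sphere d u (R u \<omega>). reach_count UNIV w \<omega>) \<partial>M)
      = 1 + (\<integral>\<^sup>+\<omega>. (\<Sum>w\<in>desc_sphere d u (R u \<omega>). reach_count UNIV w \<omega>) \<partial>M)"
    by (subst nn_integral_add) (auto simp: emeasure_space_1)
  also have "\<dots> = 1 + (\<integral>\<^sup>+\<omega>. (\<Sum>w\<in>desc_sphere d u (R u \<omega>). \<integral>\<^sup>+\<omega>'. reach_count UNIV w \<omega>' \<partial>M) \<partial>M)"
    using nn_integral_sum_reach_count[OF u sphere finite_desc_sphere] by simp
  moreover have "(\<integral>\<^sup>+\<omega>. 1 + (\<Sum>w\<in>desc_sphere d u (R u \<omega>). reach_count UNIV w \<omega>) \<partial>M)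
      \<le> (\<integral>\<^sup>+\<omega>. reach_count UNIV u \<omega> \<partial>M)"
    using ecard_cone_reach_ge[OF u, of "\<lambda>v. R v _"] by (intro nn_integral_mono) (simp add: reach_count_def)
  ultimately show ?thesis
    by simp
qed

lemma expected_reach_count_le:
  assumes u: "u \<in> tree_vert d"
  shows "(\<integral>\<^sup>+\<omega>. reach_count D u \<omega> \<partial>M)
    \<le> 1 + (\<integral>\<^sup>+\<omega>. (\<Sum>x\<in>desc_ball d u (R u \<omega>). \<integral>\<^sup>+\<omega>'. reach_count D x \<omega>' \<partial>M) \<partial>M)"
proof -
  have ball: "desc_ball d u k \<subseteq> subtree d u - {u}" for k
    by (auto simp: desc_ball_def subtree_def)
  have "(\<lambda>\<omega>. \<Sum>x\<in>desc_ball d u (R u \<omega>). reach_count D x \<omega>) \<in> borel_measurable M"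
    using ball by (intro measurable_sum_reach_count[OF u]) (auto simp: subtree_def)
  then have "(\<integral>\<^sup>+\<omega>. 1 + (\<Sum>x\<in>desc_ball d u (R u \<omega>). reach_count D x \<omega>) \<partial>M)
      = 1 + (\<integral>\<^sup>+\<omega>. (\<Sum>x\<in>desc_ball d u (R u \<omega>). reach_count D x \<omega>) \<partial>M)"
    by (subst nn_integral_add) (auto simp: emeasure_space_1)
  also have "\<dots> = 1 + (\<integral>\<^sup>+\<omega>. (\<Sum>x\<in>desc_ball d u (R u \<omega>). \<integral>\<^sup>+\<omega>'. reach_count D x \<omega>' \<partial>M) \<partial>M)"
    using nn_integral_sum_reach_count[OF u ball finite_desc_ball] by simp
  moreover have "(\<integral>\<^sup>+\<omega>. reach_count D u \<omega> \<partial>M)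
      \<le> (\<integral>\<^sup>+\<omega>. 1 + (\<Sum>x\<in>desc_ball d u (R u \<omega>). reach_count D x \<omega>) \<partial>M)"
    using ecard_cone_reach_le[of d "\<lambda>v. R v _" u] by (intro nn_integral_mono) (simp add: reach_count_def)
  ultimately show ?thesis
    by simp
qed

lemma nn_integral_card_desc_sphere:
  assumes u: "u \<in> tree_vert d" and d: "d \<ge> 1" and int: "integrable M (\<lambda>\<omega>. real d ^ R [] \<omega>)"
  shows "(\<integral>\<^sup>+\<omega>. of_nat (card (desc_sphere d u (R u \<omega>))) \<partial>M)
    = ennreal (branching d u / d * (pow_mean - prob_zero_radius))"
proof -
  let ?A = "{\<omega> \<in> space M. R [] \<omega> = 0}"
  let ?f = "\<lambda>\<omega>. branching d u / d * (real d ^ R [] \<omega> - indicator ?A \<omega>)"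
  have root: "[] \<in> tree_vert d"
    by (simp add: tree_vert_def)
  have "?A = R [] -` {0} \<inter> space M"
    by auto
  then have A: "?A \<in> events"
    using measurable_sets[OF measurable_radius[OF root]] by simp
  have ind: "integrable M (indicator ?A :: 'a \<Rightarrow> real)"
    using A by (intro integrable_real_indicator) (auto simp: less_top[symmetric])
  have f: "of_nat (card (desc_sphere d u (R [] \<omega>))) = ennreal (?f \<omega>)" if "\<omega> \<in> space M" for \<omega>
    using that by (simp add: ennreal_of_nat_eq_real_of_nat real_card_desc_sphere[OF u d] indicator_def)
  have "(\<integral>\<^sup>+\<omega>. of_nat (card (desc_sphere d u (R u \<omega>))) \<partial>M)
      = (\<integral>\<^sup>+\<omega>. of_nat (card (desc_sphere d u (R [] \<omega>))) \<partial>M)"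
    by (rule nn_integral_radius_eq_root[OF u])
  also have "\<dots> = (\<integral>\<^sup>+\<omega>. ennreal (?f \<omega>) \<partial>M)"
    by (rule nn_integral_cong) (rule f)
  also have "\<dots> = ennreal (expectation ?f)"
  proof (rule nn_integral_eq_integral)
    show "integrable M ?f"
      using Bochner_Integration.integrable_diff[OF int ind] by (rule integrable_mult_right)
    show "AE \<omega> in M. 0 \<le> ?f \<omega>"
      using d by (intro AE_I2 mult_nonneg_nonneg) (auto simp: indicator_def)
  qed
  also have "expectation ?f
      = branching d u / d * (expectation (\<lambda>\<omega>. real d ^ R [] \<omega>) - prob ?A)"
    using int ind by (simp add: Int_absorb2)
  finally show ?thesis .
qed

lemma nn_integral_card_desc_ball:
  assumes u: "u \<in> tree_vert d" and d: "d \<ge> 2" and int: "integrable M (\<lambda>\<omega>. real d ^ R [] \<omega>)"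
  shows "(\<integral>\<^sup>+\<omega>. of_nat (card (desc_ball d u (R u \<omega>))) \<partial>M)
    = ennreal (branching d u / (real d - 1) * (pow_mean - 1))"
proof -
  let ?f = "\<lambda>\<omega>. branching d u / (real d - 1) * (real d ^ R [] \<omega> - 1)"
  have f: "of_nat (card (desc_ball d u (R [] \<omega>))) = ennreal (?f \<omega>)" for \<omega>
    by (simp add: ennreal_of_nat_eq_real_of_nat real_card_desc_ball[OF u d])
  have "(\<integral>\<^sup>+\<omega>. of_nat (card (desc_ball d u (R u \<omega>))) \<partial>M)
      = (\<integral>\<^sup>+\<omega>. of_nat (card (desc_ball d u (R [] \<omega>))) \<partial>M)"
    by (rule nn_integral_radius_eq_root[OF u])
  also have "\<dots> = (\<integral>\<^sup>+\<omega>. ennreal (?f \<omega>) \<partial>M)"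
    by (simp only: f)
  also have "\<dots> = ennreal (expectation ?f)"
  proof (rule nn_integral_eq_integral)
    show "integrable M ?f"
      using int by (intro integrable_mult_right integrable_diff) auto
    show "AE \<omega> in M. 0 \<le> ?f \<omega>"
      using d by (intro AE_I2 mult_nonneg_nonneg) auto
  qed
  also have "expectation ?f = branching d u / (real d - 1) * (expectation (\<lambda>\<omega>. real d ^ R [] \<omega>) - 1)"
    using int by (simp add: prob_space)
  finally show ?thesis .
qed

lemma pow_mean_ge_one:
  assumes "d \<ge> 1" "integrable M (\<lambda>\<omega>. real d ^ R [] \<omega>)"
  shows "1 \<le> pow_mean"
proof -
  have "expectation (\<lambda>_. 1) \<le> pow_mean"
    using assms by (intro integral_mono) auto
  then show ?thesis
    by (simp add: prob_space)
qed

lemma nonroot_vertex: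
  assumes "v \<in> subtree d [] - {[]}"
  shows "v \<in> tree_vert d" "branching d v = d"
  using assms by (auto simp: subtree_def branching_def)

lemma expected_reach_count_lower_bound:
  assumes u: "u \<in> tree_vert d" and d: "d \<ge> 1" and int: "integrable M (\<lambda>\<omega>. real d ^ R [] \<omega>)"
    and a1: "pow_mean - prob_zero_radius < 1"
  shows "ennreal (1 + branching d u / d * (pow_mean - prob_zero_radius) / (1 - (pow_mean - prob_zero_radius)))
    \<le> (\<integral>\<^sup>+\<omega>. reach_count UNIV u \<omega> \<partial>M)"
proof -
  define a where "a = pow_mean - prob_zero_radius"
  define m where "m = (INF v\<in>subtree d [] - {[]}. \<integral>\<^sup>+\<omega>. reach_count UNIV v \<omega> \<partial>M)"
  have a0: "0 \<le> a"
    unfolding a_def using pow_mean_ge_one[OF d int] prob_le_1[of "{\<omega> \<in> space M. R [] \<omega> = 0}"]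
    by linarith
  have step: "1 + ennreal (branching d v / d * a) * m \<le> (\<integral>\<^sup>+\<omega>. reach_count UNIV v \<omega> \<partial>M)"
    if v: "v \<in> tree_vert d" for v
  proof -
    have "ennreal (branching d v / d * a) * m = (\<integral>\<^sup>+\<omega>. of_nat (card (desc_sphere d v (R v \<omega>))) \<partial>M) * m"
      by (simp only: nn_integral_card_desc_sphere[OF v d int] a_def)
    also have "\<dots> = (\<integral>\<^sup>+\<omega>. of_nat (card (desc_sphere d v (R v \<omega>))) * m \<partial>M)"
      by (rule nn_integral_multc[OF measurable_fun_radius[OF v], symmetric])
    also have "\<dots> \<le> (\<integral>\<^sup>+\<omega>. (\<Sum>w\<in>desc_sphere d v (R v \<omega>). \<integral>\<^sup>+\<omega>'. reach_count UNIV w \<omega>' \<partial>M) \<partial>M)"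
      unfolding m_def
      by (intro nn_integral_mono sum_bounded_below INF_lower)
         (auto simp: desc_sphere_def subtree_def anc_le_def)
    finally show ?thesis
      using expected_reach_count_ge[OF v] by (meson add_left_mono order_trans)
  qed
  have "1 + ennreal a * m \<le> m"
    unfolding m_def
    by (rule INF_greatest) (use step nonroot_vertex d in \<open>fastforce simp: m_def\<close>)
  then have "ennreal (1 / (1 - a)) \<le> m"
    using a0 a1 by (intro ennreal_geometric_le_of_recursion) (auto simp: a_def)
  then have "1 + ennreal (branching d u / d * a) * ennreal (1 / (1 - a)) \<le> (\<integral>\<^sup>+\<omega>. reach_count UNIV u \<omega> \<partial>M)"
    using step[OF u] by (meson add_left_mono mult_left_mono order_trans zero_le)
  moreover have "1 + ennreal (branching d u / d * a) * ennreal (1 / (1 - a))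
      = ennreal (1 + branching d u / d * a / (1 - a))"
    using a0 a1 by (simp add: a_def ennreal_mult[symmetric] ennreal_plus[symmetric])
  ultimately show ?thesis
    by (simp add: a_def)
qed

lemma nn_integral_reach_count_eq_SUP:
  assumes "x \<in> tree_vert d"
  shows "(\<integral>\<^sup>+\<omega>. reach_count UNIV x \<omega> \<partial>M) = (SUP n. \<integral>\<^sup>+\<omega>. reach_count (depth_le n) x \<omega> \<partial>M)"
proof -
  have "(\<integral>\<^sup>+\<omega>. reach_count UNIV x \<omega> \<partial>M) = (\<integral>\<^sup>+\<omega>. (SUP n. reach_count (depth_le n) x \<omega>) \<partial>M)"
    by (simp add: reach_count_def ecard_eq_SUP_depth_le[of "cone_reach d _ x"])
  also have "\<dots> = (SUP n. \<integral>\<^sup>+\<omega>. reach_count (depth_le n) x \<omega> \<partial>M)"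
  proof (rule nn_integral_monotone_convergence_SUP)
    show "incseq (\<lambda>n. reach_count (depth_le n) x)"
      by (auto simp: incseq_def le_fun_def reach_count_def depth_le_def intro!: emeasure_mono)
  qed (rule measurable_reach_count[OF assms])
  finally show ?thesis .
qed

lemma expected_reach_count_depth_le_bounded:
  assumes "x \<in> tree_vert d"
  shows "(\<integral>\<^sup>+\<omega>. reach_count (depth_le n) x \<omega> \<partial>M) \<le> of_nat (card {v \<in> tree_vert d. length v \<le> n})"
proof -
  have "reach_count (depth_le n) x \<omega> \<le> ecard {v \<in> tree_vert d. length v \<le> n}" for \<omega>
    unfolding reach_count_def
    by (rule emeasure_mono) (use cone_reach_desc[OF assms] in \<open>auto simp: depth_le_def\<close>)
  then have "(\<integral>\<^sup>+\<omega>. reach_count (depth_le n) x \<omega> \<partial>M) \<le> (\<integral>\<^sup>+\<omega>. ecard {v \<in> tree_vert d. length v \<le> n} \<partial>M)"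
    by (intro nn_integral_mono)
  then show ?thesis
    by (simp add: emeasure_space_1 finite_tree_vert_length_le)
qed

lemma expected_reach_count_upper_bound:
  assumes u: "u \<in> tree_vert d" and d: "d \<ge> 2" and int: "integrable M (\<lambda>\<omega>. real d ^ R [] \<omega>)"
    and b1: "real d * (pow_mean - 1) / (real d - 1) < 1"
  shows "(\<integral>\<^sup>+\<omega>. reach_count UNIV u \<omega> \<partial>M)
    \<le> ennreal (1 + branching d u / (real d - 1) * (pow_mean - 1) / (1 - real d * (pow_mean - 1) / (real d - 1)))"
proof -
  define b where "b = real d * (pow_mean - 1) / (real d - 1)"
  define K where "K = ennreal (1 / (1 - b))"
  \<comment> \<open>Counting only vertices of depth at most \<open>n\<close> keeps \<open>m n\<close> finite, as the recursion requires.\<close>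
  define m where "m n = (SUP v\<in>subtree d [] - {[]}. \<integral>\<^sup>+\<omega>. reach_count (depth_le n) v \<omega> \<partial>M)" for n
  have b0: "0 \<le> b"
    using pow_mean_ge_one[OF _ int] d by (simp add: b_def)
  have step: "(\<integral>\<^sup>+\<omega>. reach_count (depth_le n) v \<omega> \<partial>M)
      \<le> 1 + ennreal (branching d v / (real d - 1) * (pow_mean - 1)) * m n"
    if v: "v \<in> tree_vert d" for v n
  proof -
    have "(\<integral>\<^sup>+\<omega>. (\<Sum>x\<in>desc_ball d v (R v \<omega>). \<integral>\<^sup>+\<omega>'. reach_count (depth_le n) x \<omega>' \<partial>M) \<partial>M)
        \<le> (\<integral>\<^sup>+\<omega>. of_nat (card (desc_ball d v (R v \<omega>))) * m n \<partial>M)"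
      unfolding m_def
      by (intro nn_integral_mono sum_bounded_above SUP_upper)
         (auto simp: desc_ball_def subtree_def anc_le_def)
    also have "\<dots> = (\<integral>\<^sup>+\<omega>. of_nat (card (desc_ball d v (R v \<omega>))) \<partial>M) * m n"
      by (rule nn_integral_multc[OF measurable_fun_radius[OF v]])
    also have "\<dots> = ennreal (branching d v / (real d - 1) * (pow_mean - 1)) * m n"
      by (simp only: nn_integral_card_desc_ball[OF v d int])
    finally show ?thesis
      using expected_reach_count_le[OF v, of "depth_le n"] by (meson add_left_mono order_trans)
  qed
  have "m n \<le> K" for n
  proof -
    have "m n \<le> 1 + ennreal b * m n"
      unfolding m_def[of n]
      by (rule SUP_least) (use step nonroot_vertex in \<open>fastforce simp: m_def b_def\<close>)
    moreover have "m n \<le> of_nat (card {v \<in> tree_vert d. length v \<le> n})"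
      unfolding m_def
      by (rule SUP_least) (use expected_reach_count_depth_le_bounded nonroot_vertex in blast)
    then have "m n < \<top>"
      using of_nat_less_top order.strict_trans1 by blast
    ultimately show ?thesis
      unfolding K_def using b0 b1 by (intro ennreal_le_geometric_of_recursion) (auto simp: b_def)
  qed
  then have "(\<integral>\<^sup>+\<omega>. reach_count (depth_le n) u \<omega> \<partial>M)
      \<le> 1 + ennreal (branching d u / (real d - 1) * (pow_mean - 1)) * K" for n
    using step[OF u, of n] by (meson add_left_mono mult_left_mono order_trans zero_le)
  then have "(\<integral>\<^sup>+\<omega>. reach_count UNIV u \<omega> \<partial>M)
      \<le> 1 + ennreal (branching d u / (real d - 1) * (pow_mean - 1)) * K"
    unfolding nn_integral_reach_count_eq_SUP[OF u] by (rule SUP_least)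
  also have "\<dots> = ennreal (1 + branching d u / (real d - 1) * (pow_mean - 1) / (1 - b))"
    using b1 d pow_mean_ge_one[OF _ int]
    by (simp add: K_def b_def ennreal_mult[symmetric] ennreal_plus[symmetric])
  finally show ?thesis
    by (simp add: b_def)
qed

lemma expected_reach_count_root_ge:
  assumes d: "d \<ge> 1" and int: "integrable M (\<lambda>\<omega>. real d ^ R [] \<omega>)"
  shows "ennreal ((real d + pow_mean - prob_zero_radius) / (real d * (1 - pow_mean + prob_zero_radius)))
    \<le> (\<integral>\<^sup>+\<omega>. reach_count UNIV [] \<omega> \<partial>M)"
proof (cases "pow_mean - prob_zero_radius < 1")
  case True
  have "1 + real (branching d []) / d * (pow_mean - prob_zero_radius) / (1 - (pow_mean - prob_zero_radius))
      = (real d + pow_mean - prob_zero_radius) / (real d * (1 - pow_mean + prob_zero_radius))"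
  proof -
    have "1 + (x + 1) / x * a / (1 - a) = (x + a) / (x * (1 - a))" if "0 < x" "a < 1" for x a :: real
      using that by (simp add: field_simps)
    from this[of "real d" "pow_mean - prob_zero_radius"] show ?thesis
      using True d by (simp add: branching_def algebra_simps)
  qed
  then show ?thesis
    using expected_reach_count_lower_bound[OF Nil_in_tree_vert d int True] by simp
next
  case False
  then have "(real d + pow_mean - prob_zero_radius) / (real d * (1 - pow_mean + prob_zero_radius)) \<le> 0"
    using d pow_mean_ge_one[OF d int] prob_le_1[of "{\<omega> \<in> space M. R [] \<omega> = 0}"]
    by (intro divide_nonneg_nonpos mult_nonneg_nonpos) auto
  then show ?thesis
    by (simp add: ennreal_neg)
qed

lemma expected_reach_count_root_le:
  assumes d: "d \<ge> 2" and int: "integrable M (\<lambda>\<omega>. real d ^ R [] \<omega>)"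
    and small: "pow_mean < 2 - 1 / real d"
  shows "(\<integral>\<^sup>+\<omega>. reach_count UNIV [] \<omega> \<partial>M)
    \<le> ennreal ((pow_mean + real d - 2) / (2 * real d - 1 - real d * pow_mean))"
proof -
  have den: "0 < 2 * real d - 1 - real d * pow_mean"
    using small d by (simp add: field_simps)
  then have b1: "real d * (pow_mean - 1) / (real d - 1) < 1"
    using d by (simp add: field_simps)
  have "1 + branching d [] / (real d - 1) * (pow_mean - 1) / (1 - real d * (pow_mean - 1) / (real d - 1))
      = (pow_mean + real d - 2) / (2 * real d - 1 - real d * pow_mean)"
  proof -
    have "1 + (1 + x) / (x - 1) * (e - 1) / (1 - x * (e - 1) / (x - 1)) = (e + x - 2) / (2 * x - 1 - x * e)"
      if "1 < x" "0 < 2 * x - 1 - x * e" for x e :: real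
    proof -
      define D where "D = 2 * x - 1 - x * e"
      have "1 - x * (e - 1) / (x - 1) = D / (x - 1)"
        using that by (simp add: D_def field_simps)
      then have "1 + (1 + x) / (x - 1) * (e - 1) / (1 - x * (e - 1) / (x - 1)) = 1 + (1 + x) * (e - 1) / D"
        using that by (simp add: D_def)
      also have "\<dots> = (e + x - 2) / D"
        using that by (simp add: D_def field_simps)
      finally show ?thesis
        unfolding D_def .
    qed
    from this[of "real d" pow_mean] show ?thesis
      using d den by (simp add: branching_def)
  qed
  then show ?thesis
    using expected_reach_count_upper_bound[OF Nil_in_tree_vert d int b1] by simp
qed

end

theorem theorem1:
  fixes d :: nat and M :: "'a measure" and R :: "nat list \<Rightarrow> 'a \<Rightarrow> nat"
  assumes "d \<ge> 1"
    and "prob_space M"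
    and "prob_space.indep_vars M (\<lambda>_. count_space UNIV) R (tree_vert d)"
    and "\<forall>v\<in>tree_vert d. distr M (count_space UNIV) (R v) = distr M (count_space UNIV) (R [])"
    and "0 < measure M {\<omega>\<in>space M. R [] \<omega> = 0}" and "measure M {\<omega>\<in>space M. R [] \<omega> = 0} < 1"
    and "(\<integral>\<^sup>+\<omega>. ennreal (real d ^ R [] \<omega>) \<partial>M) < ennreal (2 - 1 / real d)"
  shows "let e = enn2real (\<integral>\<^sup>+\<omega>. ennreal (real d ^ R [] \<omega>) \<partial>M);
             p0 = measure M {\<omega>\<in>space M. R [] \<omega> = 0};
             EI = (\<integral>\<^sup>+\<omega>. emeasure (count_space (tree_vert d)) (cone_reached d (\<lambda>v. R v \<omega>)) \<partial>M)
         in ennreal ((real d + e - p0) / (real d * (1 - e + p0))) \<le> EI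
          \<and> EI \<le> ennreal ((e + real d - 2) / (2 * real d - 1 - real d * e))"
proof -
  interpret cone_percolation M d R
    using assms(2-4) by (intro cone_percolation.intro cone_percolation_axioms.intro) auto
  have "(\<integral>\<^sup>+\<omega>. ennreal (real d ^ R [] \<omega>) \<partial>M) < \<top>"
    using assms(7) ennreal_less_top order.strict_trans by blast
  then obtain x where "(\<integral>\<^sup>+\<omega>. ennreal (real d ^ R [] \<omega>) \<partial>M) = ennreal x"
    using less_top_ennreal by blast
  moreover have "(\<lambda>\<omega>. real d ^ R [] \<omega>) \<in> borel_measurable M"
    by (rule measurable_compose[OF measurable_radius[OF Nil_in_tree_vert]]) simp
  ultimately have int: "integrable M (\<lambda>\<omega>. real d ^ R [] \<omega>)"
    by (intro integrableI_nn_integral_finite) auto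
  have mean: "(\<integral>\<^sup>+\<omega>. ennreal (real d ^ R [] \<omega>) \<partial>M) = ennreal pow_mean"
    by (rule nn_integral_eq_integral[OF int]) auto
  have pos: "0 \<le> pow_mean"
    using pow_mean_ge_one[OF assms(1) int] by simp
  have small: "pow_mean < 2 - 1 / real d"
    using assms(7) pos unfolding mean by (simp add: ennreal_less_iff)
  have "d \<ge> 2"
    using small pow_mean_ge_one[OF assms(1) int] assms(1) by (cases "d = 1") auto
  then show ?thesis
    using expected_reach_count_root_ge[OF assms(1) int] expected_reach_count_root_le[OF _ int small] pos
    by (simp add: Let_def mean reach_count_def emeasure_count_space_cone_reached)
qed

end
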